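(* Suppose $p_{XY}$ has full support on $\mathcal{X}\times\mathcal{Y}$, and let $p(u,x,y,z)=p_{XY}(x,y)p_{Z|XY}(z|x,y)p(u|x,y,z)$ be a joint p.m.f. (with $U$ on a finite set $\mathcal{U}$) satisfying the Markov chains $U-X-Y$, $Z-(U,Y)-X$ and $U-(Y,Z)-X$. For $y\in\mathcal{Y}$ and $i\in[k(y)]$ let $\mathcal{U}_i^{(y)}=\{u\in\mathcal{U}: p(u,z|y)>0\text{ for some }z\in\mathcal{Z}_i^{(y)}\}$. Then for any $y,y'\in\mathcal{Y}$, $i\in[k(y)]$, $j\in[k(y')]$: if $\vec\alpha_i^{(y)}\neq\vec\alpha_j^{(y')}$, then $\mathcal{U}_i^{(y)}\cap\mathcal{U}_j^{(y')}=\emptyset$.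
   Context: $\mathcal{X},\mathcal{Y},\mathcal{Z}$ are finite. For $y\in\mathcal{Y}$ let $\mathcal{Z}^{(y)}=\{z\in\mathcal{Z}:\exists x,\ p_{Z|XY}(z|x,y)>0\}$. For $z,z'\in\mathcal{Z}^{(y)}$, write $z\equiv_y z'$ if the column vectors $(p_{Z|XY}(z|x,y))_{x\in\mathcal{X}}$ and $(p_{Z|XY}(z'|x,y))_{x\in\mathcal{X}}$ are positive scalar multiples of each other; this is an equivalence relation partitioning $\mathcal{Z}^{(y)}=\mathcal{Z}_1^{(y)}\uplus\cdots\uplus\mathcal{Z}_{k(y)}^{(y)}$. For each class, the $|\mathcal{X}|\times|\mathcal{Z}_i^{(y)}|$ matrix $A_i^{(y)}(x,z)=p_{Z|XY}(z|x,y)$ is rank one and can be uniquely written as $A_i^{(y)}(x,z)=\vec\alpha_i^{(y)}(x)\vec\gamma_i^{(y)}(z)$ with $\vec\alpha_i^{(y)}$ a probability vector on $\mathcal{X}$ (nonnegative entries summing to one). $[k]=\{1,\dots,k\}$. *)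

theory Defs
  imports Complex_Main
begin

text \<open>Channel W z x y = p_{Z|XY}(z|x,y); joint pmf P u x y z = p(u,x,y,z).\<close>

definition Zsupp :: "('z \<Rightarrow> 'x \<Rightarrow> 'y \<Rightarrow> real) \<Rightarrow> 'y \<Rightarrow> 'z set" where
  "Zsupp W y = {z. \<exists>x. W z x y > 0}"

definition zequiv :: "('z \<Rightarrow> 'x \<Rightarrow> 'y \<Rightarrow> real) \<Rightarrow> 'y \<Rightarrow> 'z \<Rightarrow> 'z \<Rightarrow> bool" where
  "zequiv W y z z' \<longleftrightarrow> z \<in> Zsupp W y \<and> z' \<in> Zsupp W y \<and>
     (\<exists>c>0. \<forall>x. W z x y = c * W z' x y)"

definition zclass :: "('z \<Rightarrow> 'x \<Rightarrow> 'y \<Rightarrow> real) \<Rightarrow> 'y \<Rightarrow> 'z \<Rightarrow> 'z set" where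
  "zclass W y z = {z'. zequiv W y z z'}"

text \<open>The probability vector alpha of the rank-one factorisation A(x,z) = alpha(x) gamma(z)
  of the class C (unique normalisation: alpha sums to one).\<close>
definition alpha :: "('z \<Rightarrow> 'x::finite \<Rightarrow> 'y \<Rightarrow> real) \<Rightarrow> 'y \<Rightarrow> 'z set \<Rightarrow> 'x \<Rightarrow> real" where
  "alpha W y C x = (\<Sum>z\<in>C. W z x y) / (\<Sum>x'\<in>UNIV. \<Sum>z\<in>C. W z x' y)"

definition mUXY where "mUXY P u x y = (\<Sum>z\<in>UNIV. P u x y z)"
definition mUX where "mUX P u x = (\<Sum>y\<in>UNIV. \<Sum>z\<in>UNIV. P u x y z)"
definition mUY where "mUY P u y = (\<Sum>x\<in>UNIV. \<Sum>z\<in>UNIV. P u x y z)"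
definition mUYZ where "mUYZ P u y z = (\<Sum>x\<in>UNIV. P u x y z)"
definition mXYZ where "mXYZ P x y z = (\<Sum>u\<in>UNIV. P u x y z)"
definition mXY where "mXY P x y = (\<Sum>u\<in>UNIV. \<Sum>z\<in>UNIV. P u x y z)"
definition mYZ where "mYZ P y z = (\<Sum>u\<in>UNIV. \<Sum>x\<in>UNIV. P u x y z)"
definition mX where "mX P x = (\<Sum>u\<in>UNIV. \<Sum>y\<in>UNIV. \<Sum>z\<in>UNIV. P u x y z)"

text \<open>Markov chains A - B - C in the form p(a,b,c) p(b) = p(a,b) p(b,c).\<close>
definition markov_U_X_Y :: "('u::finite \<Rightarrow> 'x::finite \<Rightarrow> 'y::finite \<Rightarrow> 'z::finite \<Rightarrow> real) \<Rightarrow> bool" where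
  "markov_U_X_Y P \<longleftrightarrow> (\<forall>u x y. mUXY P u x y * mX P x = mUX P u x * mXY P x y)"
definition markov_Z_UY_X :: "('u::finite \<Rightarrow> 'x::finite \<Rightarrow> 'y::finite \<Rightarrow> 'z::finite \<Rightarrow> real) \<Rightarrow> bool" where
  "markov_Z_UY_X P \<longleftrightarrow> (\<forall>u x y z. P u x y z * mUY P u y = mUXY P u x y * mUYZ P u y z)"
definition markov_U_YZ_X :: "('u::finite \<Rightarrow> 'x::finite \<Rightarrow> 'y::finite \<Rightarrow> 'z::finite \<Rightarrow> real) \<Rightarrow> bool" where
  "markov_U_YZ_X P \<longleftrightarrow> (\<forall>u x y z. P u x y z * mYZ P y z = mUYZ P u y z * mXYZ P x y z)"

text \<open>U_i^(y) = {u. p(u,z|y) > 0 for some z in the class}; since p(y) > 0 this is p(u,y,z) > 0.\<close>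
definition Uset :: "('u::finite \<Rightarrow> 'x::finite \<Rightarrow> 'y::finite \<Rightarrow> 'z::finite \<Rightarrow> real) \<Rightarrow> 'y \<Rightarrow> 'z set \<Rightarrow> 'u set" where
  "Uset P y C = {u. \<exists>z\<in>C. mUYZ P u y z / (\<Sum>x\<in>UNIV. mXY P x y) > 0}"

end

theory Submission
  imports Defs
begin

text \<open>If p(u,y,z) > 0, the three Markov chains force p(u|x) to be a positive multiple of
  the column W(z|\<cdot>,y), hence of \<alpha>_i^(y) for the class of z. So after normalisation the
  vector \<alpha>_i^(y) is determined by u alone, and a common u would force two different
  \<alpha>-vectors to coincide.\<close>

definition normalized :: "('x::finite \<Rightarrow> real) \<Rightarrow> 'x \<Rightarrow> real" where
  "normalized g = (\<lambda>x. g x / (\<Sum>x'\<in>UNIV. g x'))"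

lemma normalized_scale:
  assumes "c \<noteq> 0"
  shows "normalized (\<lambda>x. c * g x) = normalized g"
  using assms by (simp add: normalized_def sum_distrib_left[symmetric])

lemma alpha_eq_normalized: "alpha W y C = normalized (\<lambda>x. \<Sum>z\<in>C. W z x y)"
  by (simp add: alpha_def normalized_def fun_eq_iff)

lemma sum_proportional_columns:
  fixes v :: "'x \<Rightarrow> real" and w :: "'z \<Rightarrow> 'x \<Rightarrow> real"
  assumes "finite C" "z1 \<in> C"
    and proportional: "\<And>z. z \<in> C \<Longrightarrow> \<exists>c>0. \<forall>x. v x = c * w z x"
  shows "\<exists>d>0. \<forall>x. (\<Sum>z\<in>C. w z x) = d * v x"
proof -
  obtain k where k: "\<And>z. z \<in> C \<Longrightarrow> k z > 0 \<and> (\<forall>x. v x = k z * w z x)"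
    using bchoice[of C "\<lambda>z c. c > 0 \<and> (\<forall>x. v x = c * w z x)"] proportional by blast
  have "(\<Sum>z\<in>C. 1 / k z) \<ge> 1 / k z1"
    using assms k by (intro member_le_sum) (auto simp: less_imp_le)
  moreover have "1 / k z1 > 0" using k assms(2) by simp
  ultimately have "(\<Sum>z\<in>C. 1 / k z) > 0" by linarith
  moreover have "(\<Sum>z\<in>C. w z x) = (\<Sum>z\<in>C. 1 / k z) * v x" for x
  proof -
    have "w z x = 1 / k z * v x" if "z \<in> C" for z
      using k[OF that] by (simp add: field_simps)
    then show ?thesis by (simp add: sum_distrib_right)
  qed
  ultimately show ?thesis by blast
qed

lemma alpha_zclass_eq_normalized_column:
  fixes W :: "'z::finite \<Rightarrow> 'x::finite \<Rightarrow> 'y \<Rightarrow> real"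
  assumes "z1 \<in> zclass W y z"
  shows "alpha W y (zclass W y z) = normalized (\<lambda>x. W z1 x y)"
proof -
  have "\<exists>c>0. \<forall>x. W z x y = c * W z2 x y" if "z2 \<in> zclass W y z" for z2
    using that by (auto simp: zclass_def zequiv_def)
  then obtain d where "d > 0" and d: "\<And>x. (\<Sum>z2\<in>zclass W y z. W z2 x y) = d * W z x y"
    using sum_proportional_columns[of "zclass W y z" z1 "\<lambda>x. W z x y" "\<lambda>z2 x. W z2 x y"] assms
    by auto
  obtain c where "c > 0" and c: "\<And>x. W z x y = c * W z1 x y"
    using assms by (auto simp: zclass_def zequiv_def)
  have "alpha W y (zclass W y z) = normalized (\<lambda>x. (d * c) * W z1 x y)"
    by (simp add: alpha_eq_normalized d c mult.assoc)
  also have "\<dots> = normalized (\<lambda>x. W z1 x y)"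
    using \<open>d > 0\<close> \<open>c > 0\<close> by (intro normalized_scale) simp
  finally show ?thesis .
qed

locale channel_markov =
  fixes pXY :: "'x::finite \<Rightarrow> 'y::finite \<Rightarrow> real"
    and W :: "'z::finite \<Rightarrow> 'x \<Rightarrow> 'y \<Rightarrow> real"
    and P :: "'u::finite \<Rightarrow> 'x \<Rightarrow> 'y \<Rightarrow> 'z \<Rightarrow> real"
  assumes pXY_pos: "\<And>x y. pXY x y > 0"
    and W_sum: "\<And>x y. (\<Sum>z\<in>UNIV. W z x y) = 1"
    and P_nonneg: "\<And>u x y z. P u x y z \<ge> 0"
    and P_marg: "\<And>x y z. (\<Sum>u\<in>UNIV. P u x y z) = pXY x y * W z x y"
    and M1: "markov_U_X_Y P"
    and M2: "markov_Z_UY_X P"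
    and M3: "markov_U_YZ_X P"
begin

lemma mXYZ_eq: "mXYZ P x y z = pXY x y * W z x y"
  unfolding mXYZ_def using P_marg by simp

lemma mXY_eq: "mXY P x y = pXY x y"
proof -
  have "mXY P x y = (\<Sum>z\<in>UNIV. \<Sum>u\<in>UNIV. P u x y z)"
    unfolding mXY_def by (rule sum.swap)
  also have "\<dots> = pXY x y"
    using P_marg W_sum by (simp add: sum_distrib_left[symmetric])
  finally show ?thesis .
qed

lemma mX_pos: "mX P x > 0"
proof -
  have "mX P x = (\<Sum>y\<in>UNIV. mXY P x y)"
    unfolding mX_def mXY_def by (rule sum.swap)
  then show ?thesis using mXY_eq pXY_pos by (simp add: sum_pos)
qed

lemma mUYZ_nonneg: "mUYZ P u y z \<ge> 0"
  unfolding mUYZ_def using P_nonneg by (simp add: sum_nonneg)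

lemma mUYZ_le_mYZ: "mUYZ P u y z \<le> mYZ P y z"
proof -
  have "mYZ P y z = (\<Sum>u'\<in>UNIV. mUYZ P u' y z)" unfolding mYZ_def mUYZ_def by simp
  then show ?thesis using mUYZ_nonneg by (metis UNIV_I finite member_le_sum)
qed

lemma mUYZ_le_mUY: "mUYZ P u y z \<le> mUY P u y"
proof -
  have "mUY P u y = (\<Sum>z'\<in>UNIV. mUYZ P u y z')" unfolding mUY_def mUYZ_def by (rule sum.swap)
  then show ?thesis using mUYZ_nonneg by (metis UNIV_I finite member_le_sum)
qed

lemma cond_U_given_X_proportional_column:
  assumes pos: "mUYZ P u y z > 0"
  shows "mUX P u x / mX P x = (mUY P u y / mYZ P y z) * W z x y"
proof -
  define b where "b = mUY P u y / mYZ P y z"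
  have pYZ: "mYZ P y z > 0" using mUYZ_le_mYZ[of u y z] pos by linarith
  have chain3: "P u x y z * mYZ P y z = mUYZ P u y z * (pXY x y * W z x y)"
    using M3 mXYZ_eq unfolding markov_U_YZ_X_def by metis
  have chain2: "P u x y z * mUY P u y = mUXY P u x y * mUYZ P u y z"
    using M2 unfolding markov_Z_UY_X_def by blast
  have chain1: "mUXY P u x y * mX P x = mUX P u x * pXY x y"
    using M1 mXY_eq unfolding markov_U_X_Y_def by metis
  have "mUXY P u x y * mUYZ P u y z * mYZ P y z = P u x y z * mYZ P y z * mUY P u y"
    using chain2 by (simp add: mult_ac)
  also have "\<dots> = mUYZ P u y z * (pXY x y * W z x y) * mUY P u y"
    using chain3 by simp
  finally have mUXY_eq: "mUXY P u x y = b * pXY x y * W z x y"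
    using pos pYZ by (simp add: b_def field_simps)
  have "mUX P u x * pXY x y = mUXY P u x y * mX P x"
    using chain1 by simp
  also have "\<dots> = b * W z x y * mX P x * pXY x y"
    using mUXY_eq by (simp add: mult_ac)
  finally have "mUX P u x = b * W z x y * mX P x"
    using pXY_pos[of x y] by simp
  then show ?thesis using mX_pos[of x] by (simp add: b_def)
qed

lemma alpha_eq_normalized_cond_U_given_X:
  assumes "z1 \<in> zclass W y z" and pos: "mUYZ P u y z1 > 0"
  shows "alpha W y (zclass W y z) = normalized (\<lambda>x. mUX P u x / mX P x)"
proof -
  have "mUY P u y > 0" "mYZ P y z1 > 0"
    using pos mUYZ_le_mUY[of u y z1] mUYZ_le_mYZ[of u y z1] by linarith+
  then show ?thesis
    unfolding alpha_zclass_eq_normalized_column[OF assms(1)]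
      cond_U_given_X_proportional_column[OF pos]
    by (intro normalized_scale[symmetric]) simp
qed

lemma mem_Uset_iff: "u \<in> Uset P y C \<longleftrightarrow> (\<exists>z\<in>C. mUYZ P u y z > 0)"
proof -
  have "(\<Sum>x\<in>UNIV. mXY P x y) > 0" using mXY_eq pXY_pos by (simp add: sum_pos)
  then show ?thesis by (simp add: Uset_def zero_less_divide_iff)
qed

end

theorem claim1:
  fixes pXY :: "'x::finite \<Rightarrow> 'y::finite \<Rightarrow> real"
    and W :: "'z::finite \<Rightarrow> 'x \<Rightarrow> 'y \<Rightarrow> real"
    and P :: "'u::finite \<Rightarrow> 'x \<Rightarrow> 'y \<Rightarrow> 'z \<Rightarrow> real"
  assumes pXY_pos: "\<And>x y. pXY x y > 0"
    and pXY_sum: "(\<Sum>x\<in>UNIV. \<Sum>y\<in>UNIV. pXY x y) = 1"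
    and W_nonneg: "\<And>z x y. W z x y \<ge> 0"
    and W_sum: "\<And>x y. (\<Sum>z\<in>UNIV. W z x y) = 1"
    and P_nonneg: "\<And>u x y z. P u x y z \<ge> 0"
    and P_marg: "\<And>x y z. (\<Sum>u\<in>UNIV. P u x y z) = pXY x y * W z x y"
    and M1: "markov_U_X_Y P"
    and M2: "markov_Z_UY_X P"
    and M3: "markov_U_YZ_X P"
    and hz: "z \<in> Zsupp W y"
    and hz': "z' \<in> Zsupp W y'"
    and halpha: "alpha W y (zclass W y z) \<noteq> alpha W y' (zclass W y' z')"
  shows "Uset P y (zclass W y z) \<inter> Uset P y' (zclass W y' z') = {}"
proof -
  interpret channel_markov pXY W P
    using pXY_pos W_sum P_nonneg P_marg M1 M2 M3 by unfold_locales
  show ?thesis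
  proof (rule ccontr)
    assume "Uset P y (zclass W y z) \<inter> Uset P y' (zclass W y' z') \<noteq> {}"
    then obtain u z1 z2 where
      "z1 \<in> zclass W y z" "mUYZ P u y z1 > 0" "z2 \<in> zclass W y' z'" "mUYZ P u y' z2 > 0"
      by (auto simp: mem_Uset_iff)
    then show False
      using halpha by (simp add: alpha_eq_normalized_cond_U_given_X)
  qed
qed

end
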